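(* Let $p\in(0,1)$ and let $\mathbb D\subset\mathbb{C}$ be the open disk having the segment $[0,1]$ as a diameter. For $f$ holomorphic on $\mathbb D$ define \[ \mathcal B_p f(z)=\frac{p}{(1+z)^2}f\!\left(\frac1{1+z}\right)+\frac{1-p}{(1+z)^2}f\!\left(1-\frac1{1+z}\right), \] \[ \mathcal A_p f(z)=\sum_{n=2}^\infty\left[\frac{p}{(n+z)^2}f\!\left(\frac1{n+z}\right)+\frac{1-p}{(n+z)^2}f\!\left(1-\frac1{n+z}\right)\right]. \] Then (i) $\mathcal A_p$ is a nuclear operator on $\mathcal H^\infty(\mathbb D)$, and (ii) the operator $J_p=(1-\mathcal B_p)^{-1}$ is a well-defined bounded operator on $\mathcal H^\infty(\mathbb D)$.
   Context: $\mathcal H^\infty(\mathbb D)$ denotes the Banach space of bounded holomorphic functions on $\mathbb D$ with the norm $\|f\|=\sup_{z\in\mathbb D}|f(z)|$. Note that $\mathcal A_p+\mathcal B_p=\mathcal L_p$, where $\mathcal{L}_p f(z)=\sum_{n\ge1}\bigl[\frac{p}{(n+z)^2}f(\frac{1}{n+z})+\frac{1-p}{(n+z)^2}f(1-\frac{1}{n+z})\bigr]$. *)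

theory Defs
  imports "HOL-Analysis.Analysis"
begin

definition DD :: "complex set" where
  "DD = ball (1/2) (1/2)"

text \<open>H-infinity of DD. Elements are represented as functions on the whole
  complex plane that vanish outside DD (canonical representatives), so that
  equality of elements is plain equality of functions.\<close>
definition Hinf :: "(complex \<Rightarrow> complex) set" where
  "Hinf = {f. f holomorphic_on DD \<and> bounded (f ` DD) \<and> (\<forall>z. z \<notin> DD \<longrightarrow> f z = 0)}"

definition hnorm :: "(complex \<Rightarrow> complex) \<Rightarrow> real" where
  "hnorm f = (SUP z\<in>DD. cmod (f z))"

definition branch_term :: "real \<Rightarrow> nat \<Rightarrow> (complex \<Rightarrow> complex) \<Rightarrow> complex \<Rightarrow> complex" where
  "branch_term p n f z =
     complex_of_real p / (of_nat n + z)^2 * f (1 / (of_nat n + z))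
     + complex_of_real (1 - p) / (of_nat n + z)^2 * f (1 - 1 / (of_nat n + z))"

definition B_op :: "real \<Rightarrow> (complex \<Rightarrow> complex) \<Rightarrow> (complex \<Rightarrow> complex)" where
  "B_op p f = (\<lambda>z. if z \<in> DD then branch_term p 1 f z else 0)"

definition A_op :: "real \<Rightarrow> (complex \<Rightarrow> complex) \<Rightarrow> (complex \<Rightarrow> complex)" where
  "A_op p f = (\<lambda>z. if z \<in> DD then (\<Sum>n. branch_term p (n + 2) f z) else 0)"

definition lin_functional :: "((complex \<Rightarrow> complex) \<Rightarrow> complex) \<Rightarrow> bool" where
  "lin_functional \<phi> \<longleftrightarrow>
     (\<forall>f\<in>Hinf. \<forall>g\<in>Hinf. \<phi> (\<lambda>z. f z + g z) = \<phi> f + \<phi> g) \<and>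
     (\<forall>f\<in>Hinf. \<forall>a. \<phi> (\<lambda>z. a * f z) = a * \<phi> f)"

definition nuclear_on_Hinf :: "((complex \<Rightarrow> complex) \<Rightarrow> (complex \<Rightarrow> complex)) \<Rightarrow> bool" where
  "nuclear_on_Hinf T \<longleftrightarrow>
     (\<forall>f\<in>Hinf. T f \<in> Hinf) \<and>
     (\<exists>(\<phi> :: nat \<Rightarrow> (complex \<Rightarrow> complex) \<Rightarrow> complex) (g :: nat \<Rightarrow> complex \<Rightarrow> complex) (c :: nat \<Rightarrow> real).
        (\<forall>n. g n \<in> Hinf) \<and>
        (\<forall>n. lin_functional (\<phi> n)) \<and>
        (\<forall>n. c n \<ge> 0 \<and> (\<forall>f\<in>Hinf. cmod (\<phi> n f) \<le> c n * hnorm f)) \<and>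
        summable (\<lambda>n. c n * hnorm (g n)) \<and>
        (\<forall>f\<in>Hinf. \<forall>z. T f z = (\<Sum>n. \<phi> n f * g n z)))"

end

theory Submission
  imports Defs "HOL-Complex_Analysis.Cauchy_Integral_Formula" "HOL-Library.Nat_Bijection"
begin

text \<open>\<open>B_p\<close> does not increase the sup norm, and two applications of it contract: \<open>B_p (B_p g) z\<close>
  contains the \<open>p\<close>-weighted term \<open>(B_p g) u\<close> at \<open>u = 1/(1+z)\<close>, and since \<open>Re u > 1/2\<close> that term
  carries the factor \<open>1/|1+u|^2 \<le> 4/9\<close>. Hence \<open>\<parallel>B_p^2\<parallel> \<le> 1 - 5p/9 < 1\<close>, and the Neumann series
  \<open>\<Sum>\<^sub>k B_p^k\<close> converges in norm to the inverse of \<open>1 - B_p\<close>.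

  The \<open>n\<close>-th inverse branch of \<open>A_p\<close> maps the disk into a disk of radius \<open>1/n^2\<close> about its
  value \<open>c\<close> at \<open>0\<close>, while the disk of radius \<open>r = 3/(4n)\<close> about \<open>c\<close> still lies in the domain.
  Expanding \<open>f\<close> in its Taylor series about \<open>c\<close> writes \<open>A_p f = \<Sum> \<phi>_{n,k}(f) g_{n,k}\<close> with
  \<open>\<phi>_{n,k}(f) = f^(k)(c) r^k / k!\<close>, which Cauchy's inequality bounds by \<open>\<parallel>f\<parallel>\<close>, and
  \<open>\<parallel>g_{n,k}\<parallel> \<le> (2/3)^k / n^2\<close>, which is summable over \<open>(n, k)\<close>.\<close>

section \<open>The disk with diameter [0,1]\<close>

lemma DD_iff: "z \<in> DD \<longleftrightarrow> (cmod z)^2 < Re z"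
proof -
  have "z \<in> DD \<longleftrightarrow> cmod (z - 1/2) < 1/2"
    by (simp add: DD_def dist_norm norm_minus_commute)
  also have "\<dots> \<longleftrightarrow> (cmod (z - 1/2))^2 < (1/2)^2"
  proof
    assume "cmod (z - 1/2) < 1/2"
    then show "(cmod (z - 1/2))^2 < (1/2)^2" by (intro power_strict_mono) auto
  next
    assume "(cmod (z - 1/2))^2 < (1/2)^2"
    then show "cmod (z - 1/2) < 1/2" by (rule power_less_imp_less_base) simp
  qed
  also have "(cmod (z - 1/2))^2 = (cmod z)^2 - Re z + 1/4"
    unfolding cmod_power2 by (simp add: power2_eq_square algebra_simps)
  also have "\<dots> < (1/2)^2 \<longleftrightarrow> (cmod z)^2 < Re z"
    by (auto simp: power_divide)
  finally show ?thesis .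
qed

lemma Re_pos_of_DD: "z \<in> DD \<Longrightarrow> 0 < Re z"
  using zero_le_power2[of "cmod z"] unfolding DD_iff by linarith

lemma norm_less_one_of_DD:
  assumes "z \<in> DD"
  shows "cmod z < 1"
proof -
  have "cmod z * cmod z < cmod z * 1"
    using assms complex_Re_le_cmod[of z] unfolding DD_iff power2_eq_square by linarith
  moreover have "0 < cmod z"
    using calculation by (cases "z = 0") auto
  ultimately show ?thesis
    using mult_less_cancel_left_pos by metis
qed

lemma one_minus_in_DD: "z \<in> DD \<Longrightarrow> 1 - z \<in> DD"
  unfolding DD_iff cmod_power2 by (simp add: power2_eq_square algebra_simps)

lemma inverse_in_DD:
  assumes "1 < Re w"
  shows "1 / w \<in> DD"
proof -
  have "0 < cmod w" using assms by auto
  then have "(cmod (1 / w))^2 = 1 / (cmod w)^2" "Re (1 / w) = Re w / (cmod w)^2"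
    by (simp_all add: norm_divide power_one_over Re_divide cmod_power2)
  then show ?thesis using assms \<open>0 < cmod w\<close> by (simp add: DD_iff divide_strict_right_mono)
qed

lemma of_nat_le_norm_add_DD: "z \<in> DD \<Longrightarrow> real m \<le> cmod (of_nat m + z)"
  using complex_Re_le_cmod[of "of_nat m + z"] Re_pos_of_DD[of z] by simp

lemma inverse_one_add_in_DD: "z \<in> DD \<Longrightarrow> 1 / (1 + z) \<in> DD"
  using Re_pos_of_DD[of z] by (intro inverse_in_DD) simp

lemma one_le_norm_one_add_DD: "z \<in> DD \<Longrightarrow> 1 \<le> cmod (1 + z)"
  using of_nat_le_norm_add_DD[of z 1] by simp

lemma Re_inverse_one_add_DD:
  assumes "z \<in> DD"
  shows "1/2 < Re (1 / (1 + z))"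
proof -
  have "(cmod (1 + z))^2 = 1 + 2 * Re z + (cmod z)^2"
    unfolding cmod_power2 by (simp add: power2_eq_square algebra_simps)
  moreover have "(cmod z)^2 < 1"
    using norm_less_one_of_DD[OF assms] by (simp add: abs_square_less_1)
  ultimately have "(cmod (1 + z))^2 < 2 * (1 + Re z)"
    by (simp add: algebra_simps)
  moreover have "Re (1 / (1 + z)) = (1 + Re z) / (cmod (1 + z))^2"
    by (simp add: Re_divide cmod_power2)
  moreover have "0 < (cmod (1 + z))^2"
    using one_le_norm_one_add_DD[OF assms] by (intro zero_less_power) linarith
  ultimately show ?thesis
    by (simp add: less_divide_eq)
qed

lemma norm_inverse_add_DD_diff_le:
  assumes "z \<in> DD" "0 < m"
  shows "cmod (1 / (of_nat m + z) - 1 / of_nat m) \<le> 1 / (real m)^2"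
proof -
  have mz: "real m \<le> cmod (of_nat m + z)" by (rule of_nat_le_norm_add_DD[OF assms(1)])
  moreover have "of_nat m + z \<noteq> 0" using mz assms(2) by auto
  ultimately have "1 / (of_nat m + z) - 1 / of_nat m = - z / ((of_nat m + z) * of_nat m)"
    using assms(2) by (simp add: field_simps)
  then have "cmod (1 / (of_nat m + z) - 1 / of_nat m) = cmod z / (cmod (of_nat m + z) * real m)"
    by (simp add: norm_divide norm_mult)
  also have "\<dots> \<le> 1 / (real m * real m)"
    using norm_less_one_of_DD[OF assms(1)] mz assms(2)
    by (intro frac_le) (auto intro: mult_right_mono)
  finally show ?thesis by (simp add: power2_eq_square)
qed

section \<open>Bounded holomorphic functions\<close>

lemma HinfI:
  assumes "f holomorphic_on DD" "\<And>z. z \<in> DD \<Longrightarrow> cmod (f z) \<le> M" "\<And>z. z \<notin> DD \<Longrightarrow> f z = 0"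
  shows "f \<in> Hinf"
proof -
  have "bounded (f ` DD)" using assms(2) by (auto simp: bounded_iff)
  then show ?thesis using assms by (auto simp: Hinf_def)
qed

lemma Hinf_holomorphic: "f \<in> Hinf \<Longrightarrow> f holomorphic_on DD"
  by (simp add: Hinf_def)

lemma Hinf_outside_DD: "f \<in> Hinf \<Longrightarrow> z \<notin> DD \<Longrightarrow> f z = 0"
  by (simp add: Hinf_def)

lemma norm_le_hnorm:
  assumes "f \<in> Hinf"
  shows "cmod (f z) \<le> hnorm f"
proof -
  have "bounded (f ` DD)" using assms by (simp add: Hinf_def)
  then have bdd: "bdd_above ((\<lambda>z. cmod (f z)) ` DD)"
    by (auto simp: bounded_iff bdd_above_def)
  have le: "cmod (f w) \<le> hnorm f" if "w \<in> DD" for w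
    unfolding hnorm_def using that bdd by (rule cSUP_upper)
  show ?thesis
  proof (cases "z \<in> DD")
    case False
    then have "cmod (f z) = 0" by (simp add: Hinf_outside_DD[OF assms])
    also have "\<dots> \<le> cmod (f (1/2))" by simp
    also have "\<dots> \<le> hnorm f" by (rule le) (simp add: DD_def)
    finally show ?thesis .
  qed (rule le)
qed

lemma hnorm_nonneg: "f \<in> Hinf \<Longrightarrow> 0 \<le> hnorm f"
  using norm_le_hnorm[of f 0] norm_ge_zero[of "f 0"] by linarith

lemma hnorm_le:
  assumes "\<And>z. z \<in> DD \<Longrightarrow> cmod (f z) \<le> M"
  shows "hnorm f \<le> M"
proof -
  have "1/2 \<in> DD" by (simp add: DD_def)
  then show ?thesis unfolding hnorm_def using assms by (intro cSUP_least) auto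
qed

lemma Hinf_cmult:
  assumes "g \<in> Hinf"
  shows "(\<lambda>z. a * g z) \<in> Hinf"
proof (rule HinfI)
  show "(\<lambda>z. a * g z) holomorphic_on DD"
    using Hinf_holomorphic[OF assms] by (intro holomorphic_intros)
  show "cmod (a * g z) \<le> cmod a * hnorm g" for z
    unfolding norm_mult using norm_le_hnorm[OF assms] by (rule mult_left_mono) simp
  show "a * g z = 0" if "z \<notin> DD" for z
    using Hinf_outside_DD[OF assms that] by simp
qed

lemma
  fixes h :: "nat \<Rightarrow> complex \<Rightarrow> complex"
  assumes h: "\<And>k. h k \<in> Hinf" and bound: "\<And>k z. cmod (h k z) \<le> M k" and M: "summable M"
  shows Hinf_suminf: "(\<lambda>z. \<Sum>k. h k z) \<in> Hinf"
    and hnorm_suminf_le: "hnorm (\<lambda>z. \<Sum>k. h k z) \<le> (\<Sum>k. M k)"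
proof -
  have le: "cmod (\<Sum>k. h k z) \<le> (\<Sum>k. M k)" for z
    using bound M by (rule norm_suminf_le)
  have "open DD" by (simp add: DD_def)
  then have "(\<lambda>z. \<Sum>k. h k z) holomorphic_on DD"
  proof (rule holomorphic_uniform_sequence)
    show "(\<lambda>z. \<Sum>k<n. h k z) holomorphic_on DD" for n
      using h by (intro holomorphic_on_sum) (auto intro: Hinf_holomorphic)
    fix z assume "z \<in> DD"
    then obtain d where "0 < d" "cball z d \<subseteq> DD"
      using open_contains_cball[of DD] \<open>open DD\<close> by blast
    moreover have "uniform_limit (cball z d) (\<lambda>n z. \<Sum>k<n. h k z) (\<lambda>z. \<Sum>k. h k z) sequentially"
      using bound M by (intro Weierstrass_m_test) auto
    ultimately show "\<exists>d>0. cball z d \<subseteq> DD \<and>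
        uniform_limit (cball z d) (\<lambda>n z. \<Sum>k<n. h k z) (\<lambda>z. \<Sum>k. h k z) sequentially"
      by blast
  qed
  then show "(\<lambda>z. \<Sum>k. h k z) \<in> Hinf"
    using le h by (intro HinfI) (auto simp: Hinf_outside_DD)
  show "hnorm (\<lambda>z. \<Sum>k. h k z) \<le> (\<Sum>k. M k)"
    using le by (rule hnorm_le)
qed

lemma norm_funpow_le_of_two_step_contraction:
  fixes T :: "('a \<Rightarrow> 'b::real_normed_vector) \<Rightarrow> 'a \<Rightarrow> 'b"
  assumes one: "\<And>g M z. 0 \<le> M \<Longrightarrow> (\<And>w. norm (g w) \<le> M) \<Longrightarrow> norm (T g z) \<le> M"
    and two: "\<And>g M z. 0 \<le> M \<Longrightarrow> (\<And>w. norm (g w) \<le> M) \<Longrightarrow> norm (T (T g) z) \<le> s^2 * M"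
    and s: "0 < s" "s \<le> 1"
    and M: "0 \<le> M" "\<And>w. norm (g w) \<le> M"
  shows "norm ((T ^^ k) g z) \<le> 1 / s * s ^ k * M"
proof (induction k arbitrary: z rule: nat_induct2)
  case 0
  have "M \<le> M / s"
    using s M(1) by (simp add: le_divide_eq mult_left_le)
  then show ?case using M(2)[of z] by simp
next
  case 1
  show ?case using one[OF M] s by simp
next
  case (step k)
  have "norm (T (T ((T ^^ k) g)) z) \<le> s^2 * (1 / s * s ^ k * M)"
    using step s M by (intro two) auto
  also have "\<dots> = 1 / s * s ^ (k + 2) * M"
    using s(1) by (simp add: power_add power2_eq_square field_simps)
  finally show ?case by (simp add: numeral_2_eq_2)
qed

lemma Neumann_series_inverse_Hinf:
  fixes T :: "(complex \<Rightarrow> complex) \<Rightarrow> complex \<Rightarrow> complex"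
  assumes T_Hinf: "\<And>f. f \<in> Hinf \<Longrightarrow> T f \<in> Hinf"
    and T_diff: "\<And>f g. T (\<lambda>z. f z - g z) = (\<lambda>z. T f z - T g z)"
    and T_suminf: "\<And>h z. (\<And>w. summable (\<lambda>k. h k w)) \<Longrightarrow> T (\<lambda>w. \<Sum>k. h k w) z = (\<Sum>k. T (h k) z)"
    and decay: "\<And>f k z. f \<in> Hinf \<Longrightarrow> cmod ((T ^^ k) f z) \<le> C * q ^ k * hnorm f"
    and q: "0 \<le> q" "q < 1"
  shows "\<exists>J. (\<forall>f\<in>Hinf. J f \<in> Hinf)
              \<and> (\<forall>f\<in>Hinf. (\<lambda>z. J f z - T (J f) z) = f)
              \<and> (\<forall>f\<in>Hinf. J (\<lambda>z. f z - T f z) = f)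
              \<and> (\<exists>C. \<forall>f\<in>Hinf. hnorm (J f) \<le> C * hnorm f)"
proof -
  define J where "J f = (\<lambda>z. \<Sum>k. (T ^^ k) f z)" for f
  have funpow_Hinf: "(T ^^ k) f \<in> Hinf" if "f \<in> Hinf" for f k
    using that by (induction k) (auto intro: T_Hinf)
  have geom: "summable (\<lambda>k. C * q ^ k * hnorm f)" for f
    using q by (intro summable_mult summable_mult2 summable_geometric) auto
  have summable: "summable (\<lambda>k. (T ^^ k) f z)" if "f \<in> Hinf" for f z
    using geom decay[OF that] by (rule summable_comparison_test')
  have "(\<lambda>z. J f z - T (J f) z) = f" if "f \<in> Hinf" for f
  proof
    fix z
    have "T (J f) z = (\<Sum>k. (T ^^ Suc k) f z)"
      unfolding J_def using summable[OF that] by (simp add: T_suminf)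
    also have "\<dots> = J f z - f z"
      using suminf_split_head[OF summable[OF that]] by (simp add: J_def)
    finally show "J f z - T (J f) z = f z" by simp
  qed
  moreover have "J (\<lambda>z. f z - T f z) = f" if "f \<in> Hinf" for f
  proof
    fix z
    have "(T ^^ k) (\<lambda>z. f z - T f z) = (\<lambda>z. (T ^^ k) f z - (T ^^ Suc k) f z)" for k
      by (induction k) (simp_all add: T_diff)
    then have "J (\<lambda>z. f z - T f z) z = (\<Sum>k. (T ^^ k) f z - (T ^^ Suc k) f z)"
      by (simp add: J_def)
    also have "\<dots> = f z"
      using telescope_sums'[OF summable_LIMSEQ_zero[OF summable[OF that]]] by (simp add: sums_iff)
    finally show "J (\<lambda>z. f z - T f z) z = f z" .
  qed
  moreover have "J f \<in> Hinf" if "f \<in> Hinf" for f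
    unfolding J_def by (rule Hinf_suminf[OF funpow_Hinf[OF that] decay[OF that] geom])
  moreover have "hnorm (J f) \<le> C / (1 - q) * hnorm f" if "f \<in> Hinf" for f
  proof -
    have "hnorm (J f) \<le> (\<Sum>k. C * q ^ k * hnorm f)"
      unfolding J_def by (rule hnorm_suminf_le[OF funpow_Hinf[OF that] decay[OF that] geom])
    also have "\<dots> = C * hnorm f * (\<Sum>k. q ^ k)"
      using q by (subst suminf_mult[symmetric]) (auto simp: mult_ac)
    also have "\<dots> = C / (1 - q) * hnorm f"
      using q by (simp add: suminf_geometric)
    finally show ?thesis .
  qed
  ultimately show ?thesis by blast
qed

section \<open>The operator B_p\<close>

lemma B_op_eq:
  "z \<in> DD \<Longrightarrow> B_op p g z = of_real p / (1 + z)^2 * g (1 / (1 + z))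
      + of_real (1 - p) / (1 + z)^2 * g (1 - 1 / (1 + z))"
  by (simp add: B_op_def branch_term_def)

lemma B_op_outside_DD: "z \<notin> DD \<Longrightarrow> B_op p g z = 0"
  by (simp add: B_op_def)

lemma norm_B_op_le:
  assumes "0 \<le> p" "p \<le> 1" "z \<in> DD"
  shows "cmod (B_op p g z)
    \<le> (p * cmod (g (1 / (1 + z))) + (1 - p) * cmod (g (1 - 1 / (1 + z)))) / (cmod (1 + z))^2"
proof -
  have "cmod (B_op p g z) \<le> cmod (of_real p / (1 + z)^2) * cmod (g (1 / (1 + z)))
      + cmod (of_real (1 - p) / (1 + z)^2) * cmod (g (1 - 1 / (1 + z)))"
    unfolding B_op_eq[OF assms(3)] by (metis norm_mult norm_triangle_ineq)
  also have "\<dots> = (p * cmod (g (1 / (1 + z))) + (1 - p) * cmod (g (1 - 1 / (1 + z)))) / (cmod (1 + z))^2"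
    unfolding norm_divide norm_power norm_of_real using assms(1,2) by (simp add: add_divide_distrib)
  finally show ?thesis .
qed

lemma norm_B_op_le_div:
  assumes "0 \<le> p" "p \<le> 1" "z \<in> DD" "\<And>w. w \<in> DD \<Longrightarrow> cmod (g w) \<le> M"
  shows "cmod (B_op p g z) \<le> M / (cmod (1 + z))^2"
proof -
  have "p * cmod (g (1 / (1 + z))) + (1 - p) * cmod (g (1 - 1 / (1 + z))) \<le> p * M + (1 - p) * M"
    using assms inverse_one_add_in_DD one_minus_in_DD by (intro add_mono mult_left_mono) auto
  then have "(p * cmod (g (1 / (1 + z))) + (1 - p) * cmod (g (1 - 1 / (1 + z)))) / (cmod (1 + z))^2
      \<le> M / (cmod (1 + z))^2"
    by (simp add: divide_right_mono algebra_simps)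
  with norm_B_op_le[OF assms(1-3)] show ?thesis by (rule order_trans)
qed

lemma norm_B_op_le_sup:
  assumes "0 \<le> p" "p \<le> 1" "0 \<le> M" "\<And>w. w \<in> DD \<Longrightarrow> cmod (g w) \<le> M"
  shows "cmod (B_op p g z) \<le> M"
proof (cases "z \<in> DD")
  case True
  have "M / (cmod (1 + z))^2 \<le> M / 1"
    using one_le_norm_one_add_DD[OF True] assms(3) by (intro divide_left_mono) (auto simp: one_le_power)
  then show ?thesis using norm_B_op_le_div[where g = g and M = M, OF assms(1,2) True assms(4)] by simp
qed (use assms(3) in \<open>simp add: B_op_outside_DD\<close>)

lemma norm_B_op_B_op_le:
  assumes p: "0 \<le> p" "p \<le> 1" and M: "0 \<le> M" "\<And>w. w \<in> DD \<Longrightarrow> cmod (g w) \<le> M"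
  shows "cmod (B_op p (B_op p g) z) \<le> (1 - 5 * p / 9) * M"
proof (cases "z \<in> DD")
  case True
  define u where "u = 1 / (1 + z)"
  have u: "u \<in> DD" using inverse_one_add_in_DD[OF True] by (simp add: u_def)
  have "3/2 \<le> cmod (1 + u)"
    using complex_Re_le_cmod[of "1 + u"] Re_inverse_one_add_DD[OF True] by (simp add: u_def)
  moreover from this have "0 < cmod (1 + u)" by linarith
  ultimately have "M / (cmod (1 + u))^2 \<le> M / (3/2)^2"
    using M(1) by (intro divide_left_mono power_mono) auto
  moreover have "M / (3/2)^2 = 4/9 * M"
    by (simp add: power_divide)
  ultimately have Bu: "cmod (B_op p g u) \<le> 4/9 * M"
    using norm_B_op_le_div[where g = g and M = M, OF p u M(2)] by linarith
  have B1u: "cmod (B_op p g (1 - u)) \<le> M"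
    by (rule norm_B_op_le_sup[OF p M])
  let ?S = "p * cmod (B_op p g u) + (1 - p) * cmod (B_op p g (1 - u))"
  have "cmod (B_op p (B_op p g) z) \<le> ?S / (cmod (1 + z))^2"
    using norm_B_op_le[OF p True] by (simp add: u_def)
  also have "\<dots> \<le> ?S"
  proof -
    have "?S / (cmod (1 + z))^2 \<le> ?S / 1"
      using one_le_norm_one_add_DD[OF True] p by (intro divide_left_mono) (auto simp: one_le_power)
    then show ?thesis by simp
  qed
  also have "\<dots> \<le> p * (4/9 * M) + (1 - p) * M"
    using Bu B1u p by (intro add_mono mult_left_mono) auto
  also have "\<dots> = (1 - 5 * p / 9) * M"
    by (simp add: algebra_simps)
  finally show ?thesis .
qed (use p M(1) in \<open>simp add: B_op_outside_DD\<close>)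

lemma B_op_Hinf:
  assumes "0 \<le> p" "p \<le> 1" "g \<in> Hinf"
  shows "B_op p g \<in> Hinf"
proof (rule HinfI)
  have nz: "1 + z \<noteq> 0" if "z \<in> DD" for z
    using one_le_norm_one_add_DD[OF that] by auto
  have g: "g holomorphic_on DD" using assms(3) by (rule Hinf_holomorphic)
  have "(\<lambda>z. g (1 / (1 + z))) holomorphic_on DD" "(\<lambda>z. g (1 - 1 / (1 + z))) holomorphic_on DD"
    using nz inverse_one_add_in_DD one_minus_in_DD
    by (auto intro!: holomorphic_on_compose_gen[OF _ g, unfolded o_def] holomorphic_intros)
  then have "(\<lambda>z. of_real p / (1 + z)^2 * g (1 / (1 + z))
      + of_real (1 - p) / (1 + z)^2 * g (1 - 1 / (1 + z))) holomorphic_on DD"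
    using nz by (auto intro!: holomorphic_intros)
  then show "B_op p g holomorphic_on DD"
    by (rule holomorphic_transform) (simp add: B_op_eq)
  show "cmod (B_op p g z) \<le> hnorm g" for z
    using assms by (intro norm_B_op_le_sup hnorm_nonneg norm_le_hnorm) auto
qed (rule B_op_outside_DD)

lemma B_op_diff: "B_op p (\<lambda>z. f z - g z) = (\<lambda>z. B_op p f z - B_op p g z)"
  by (rule ext) (simp add: B_op_def branch_term_def algebra_simps)

lemma B_op_suminf:
  assumes "\<And>w. summable (\<lambda>k. h k w)"
  shows "B_op p (\<lambda>w. \<Sum>k. h k w) z = (\<Sum>k. B_op p (h k) z)"
proof (cases "z \<in> DD")
  case True
  let ?a = "of_real p / (1 + z)^2" and ?b = "of_real (1 - p) / (1 + z)^2"
  have "B_op p (\<lambda>w. \<Sum>k. h k w) z = ?a * (\<Sum>k. h k (1 / (1 + z))) + ?b * (\<Sum>k. h k (1 - 1 / (1 + z)))"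
    using True by (simp add: B_op_eq)
  also have "\<dots> = (\<Sum>k. ?a * h k (1 / (1 + z))) + (\<Sum>k. ?b * h k (1 - 1 / (1 + z)))"
    by (simp only: suminf_mult[OF assms])
  also have "\<dots> = (\<Sum>k. ?a * h k (1 / (1 + z)) + ?b * h k (1 - 1 / (1 + z)))"
    using assms by (intro suminf_add summable_mult)
  also have "\<dots> = (\<Sum>k. B_op p (h k) z)"
    using True by (simp add: B_op_eq)
  finally show ?thesis .
qed (simp add: B_op_outside_DD)

section \<open>Nuclearity of A_p\<close>

lemma sums_prod_decode:
  fixes F :: "nat \<times> nat \<Rightarrow> 'a::banach"
  assumes "(\<lambda>x. norm (F x)) summable_on UNIV"
  shows "(\<lambda>j. F (prod_decode j)) sums (\<Sum>n. \<Sum>k. F (n, k))"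
proof -
  have F: "F summable_on UNIV" using assms by (rule abs_summable_summable)
  have rows_sums: "((\<lambda>k. F (n, k)) has_sum (\<Sum>k. F (n, k))) UNIV" for n
  proof -
    have "F summable_on range (Pair n)"
      using F by (rule summable_on_subset_banach) simp
    then have "(\<lambda>k. F (n, k)) summable_on UNIV"
      by (subst (asm) summable_on_reindex) (auto simp: inj_on_def o_def)
    then have "((\<lambda>k. F (n, k)) has_sum infsum (\<lambda>k. F (n, k)) UNIV) UNIV"
      by (simp add: summable_iff_has_sum_infsum)
    moreover from this have "infsum (\<lambda>k. F (n, k)) UNIV = (\<Sum>k. F (n, k))"
      by (rule sums_unique[OF has_sum_imp_sums])
    ultimately show ?thesis by simp
  qed
  have rows: "((\<lambda>n. \<Sum>k. F (n, k)) has_sum infsum F UNIV) UNIV"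
  proof (rule has_sum_SigmaD[where B = "\<lambda>_. UNIV"])
    show "(F has_sum infsum F UNIV) (Sigma UNIV (\<lambda>_. UNIV))"
      using F by (simp add: summable_iff_has_sum_infsum)
  qed (rule rows_sums)
  have "((\<lambda>j. F (prod_decode j)) has_sum infsum F UNIV) UNIV"
    using F has_sum_reindex_bij_betw[OF bij_prod_decode, of F] by (simp add: summable_iff_has_sum_infsum)
  then show ?thesis
    using sums_unique[OF has_sum_imp_sums[OF rows]] by (simp add: has_sum_imp_sums)
qed

lemma nuclear_on_HinfI:
  fixes \<phi> :: "nat \<Rightarrow> nat \<Rightarrow> (complex \<Rightarrow> complex) \<Rightarrow> complex"
    and g :: "nat \<Rightarrow> nat \<Rightarrow> complex \<Rightarrow> complex" and b :: "nat \<Rightarrow> nat \<Rightarrow> real"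
  assumes g_Hinf: "\<And>i k. g i k \<in> Hinf"
    and lin: "\<And>i k. lin_functional (\<phi> i k)"
    and \<phi>_le: "\<And>i k f. f \<in> Hinf \<Longrightarrow> cmod (\<phi> i k f) \<le> hnorm f"
    and g_le: "\<And>i k z. cmod (g i k z) \<le> b i k"
    and b: "(\<lambda>(i, k). b i k) summable_on UNIV"
    and T: "\<And>f z. f \<in> Hinf \<Longrightarrow> T f z = (\<Sum>i. \<Sum>k. \<phi> i k f * g i k z)"
  shows "nuclear_on_Hinf T"
proof -
  define \<phi>' where "\<phi>' = (\<lambda>j. case_prod \<phi> (prod_decode j))"
  define g' where "g' = (\<lambda>j. case_prod g (prod_decode j))"
  define b' where "b' = (\<lambda>j. case_prod b (prod_decode j))"
  have b_nonneg: "0 \<le> b i k" for i k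
    using g_le[of i k 0] norm_ge_zero order_trans by blast
  have "(\<lambda>j. case_prod b (prod_decode j)) summable_on UNIV"
    using b summable_on_reindex_bij_betw[OF bij_prod_decode] by blast
  then have b': "summable b'"
    unfolding b'_def using b_nonneg
    by (subst (asm) summable_on_UNIV_nonneg_real_iff) (auto split: prod.split)
  have g'_le: "cmod (g' j z) \<le> b' j" for j z
    by (simp add: g'_def b'_def g_le split: prod.split)
  have \<phi>g_le: "cmod (\<phi> i k f * g i k z) \<le> hnorm f * b i k" if "f \<in> Hinf" for f i k z
    unfolding norm_mult using that by (intro mult_mono \<phi>_le g_le hnorm_nonneg) auto
  have rep: "T f z = (\<Sum>j. \<phi>' j f * g' j z)" if "f \<in> Hinf" for f z
  proof -
    have abs: "(\<lambda>x. norm (case_prod (\<lambda>i k. \<phi> i k f * g i k z) x)) summable_on UNIV"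
    proof (rule Infinite_Sum.abs_summable_on_comparison_test')
      show "(\<lambda>x. hnorm f * case_prod b x) summable_on UNIV"
        using b by (rule summable_on_cmult_right)
      show "norm (case_prod (\<lambda>i k. \<phi> i k f * g i k z) x) \<le> hnorm f * case_prod b x" for x
        using \<phi>g_le[OF that] by (cases x) simp
    qed
    have "(\<lambda>j. case_prod (\<lambda>i k. \<phi> i k f * g i k z) (prod_decode j)) sums (\<Sum>i. \<Sum>k. \<phi> i k f * g i k z)"
      using sums_prod_decode[OF abs] by simp
    then show ?thesis
      using T[OF that] by (simp add: \<phi>'_def g'_def sums_iff case_prod_beta)
  qed
  have "T f \<in> Hinf" if "f \<in> Hinf" for f
  proof -
    have "T f = (\<lambda>z. \<Sum>j. \<phi>' j f * g' j z)"
      by (rule ext) (rule rep[OF that])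
    also have "\<dots> \<in> Hinf"
    proof (rule Hinf_suminf)
      show "(\<lambda>z. \<phi>' j f * g' j z) \<in> Hinf" for j
        using g_Hinf by (simp add: g'_def Hinf_cmult split: prod.split)
      show "cmod (\<phi>' j f * g' j z) \<le> hnorm f * b' j" for j z
        using \<phi>g_le[OF that] by (simp add: \<phi>'_def g'_def b'_def split: prod.split)
    qed (rule summable_mult[OF b'])
    finally show ?thesis .
  qed
  moreover have g'_Hinf: "g' j \<in> Hinf" for j
    using g_Hinf by (simp add: g'_def split: prod.split)
  moreover have "summable (\<lambda>j. 1 * hnorm (g' j))"
  proof (rule summable_comparison_test'[OF b'])
    show "norm (1 * hnorm (g' j)) \<le> b' j" for j
      using hnorm_nonneg[OF g'_Hinf] hnorm_le[OF g'_le] by simp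
  qed
  moreover have "lin_functional (\<phi>' j)" for j
    using lin by (simp add: \<phi>'_def split: prod.split)
  moreover have "cmod (\<phi>' j f) \<le> 1 * hnorm f" if "f \<in> Hinf" for j f
    using \<phi>_le[OF that] by (simp add: \<phi>'_def split: prod.split)
  ultimately show ?thesis
    unfolding nuclear_on_Hinf_def using rep
    by (auto intro!: exI[of _ \<phi>'] exI[of _ g'] exI[of _ "\<lambda>_. 1"])
qed

text \<open>The summands of A_op are split into pieces: pieces \<open>2j\<close> and \<open>2j+1\<close> are the
  \<open>p\<close>- and the \<open>(1-p)\<close>-term of the branch \<open>n = j + 2\<close>.\<close>

definition piece_level :: "nat \<Rightarrow> nat" where
  "piece_level i = i div 2 + 2"

definition piece_map :: "nat \<Rightarrow> complex \<Rightarrow> complex" where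
  "piece_map i z =
     (if even i then 1 / (of_nat (piece_level i) + z) else 1 - 1 / (of_nat (piece_level i) + z))"

definition piece_weight :: "real \<Rightarrow> nat \<Rightarrow> complex" where
  "piece_weight p i = of_real (if even i then p else 1 - p)"

definition piece :: "real \<Rightarrow> nat \<Rightarrow> (complex \<Rightarrow> complex) \<Rightarrow> complex \<Rightarrow> complex" where
  "piece p i f z = piece_weight p i * f (piece_map i z) / (of_nat (piece_level i) + z)^2"

definition piece_centre :: "nat \<Rightarrow> complex" where
  "piece_centre i = piece_map i 0"

definition piece_radius :: "nat \<Rightarrow> real" where
  "piece_radius i = 3 / (4 * real (piece_level i))"

lemma branch_term_eq_piece_pair:
  "branch_term p (j + 2) f z = piece p (2 * j) f z + piece p (Suc (2 * j)) f z"
  by (simp add: branch_term_def piece_def piece_map_def piece_weight_def piece_level_def field_simps)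

lemma piece_level_ge: "2 \<le> piece_level i"
  by (simp add: piece_level_def)

lemma piece_radius_pos: "0 < piece_radius i"
  by (simp add: piece_radius_def piece_level_def)

lemma norm_piece_weight_le: "0 \<le> p \<Longrightarrow> p \<le> 1 \<Longrightarrow> cmod (piece_weight p i) \<le> 1"
  by (simp add: piece_weight_def)

lemma norm_piece_map_diff_le:
  assumes "z \<in> DD"
  shows "cmod (piece_map i z - piece_centre i) \<le> 1 / (real (piece_level i))^2"
proof -
  let ?m = "piece_level i"
  have "cmod (piece_map i z - piece_centre i) = cmod (1 / (of_nat ?m + z) - 1 / of_nat ?m)"
    by (cases "even i") (simp_all add: piece_centre_def piece_map_def norm_minus_commute)
  also have "\<dots> \<le> 1 / (real ?m)^2"
    using piece_level_ge[of i] by (intro norm_inverse_add_DD_diff_le[OF assms]) simp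
  finally show ?thesis .
qed

lemma norm_piece_centre_diff_half: "cmod (piece_centre i - 1/2) = 1/2 - 1 / real (piece_level i)"
proof -
  let ?m = "real (piece_level i)"
  have "piece_centre i - 1/2 = of_real (if even i then 1 / ?m - 1/2 else 1/2 - 1 / ?m)"
    by (simp add: piece_centre_def piece_map_def)
  moreover have "1 / ?m \<le> 1/2" using piece_level_ge[of i] by simp
  ultimately show ?thesis by (simp only: norm_of_real) auto
qed

lemma cball_piece_centre_subset_DD: "cball (piece_centre i) (piece_radius i) \<subseteq> DD"
proof
  fix w assume "w \<in> cball (piece_centre i) (piece_radius i)"
  then have w: "cmod (w - piece_centre i) \<le> 3 / (4 * real (piece_level i))"
    by (simp add: piece_radius_def dist_norm norm_minus_commute)
  have "cmod (w - 1/2) \<le> cmod (w - piece_centre i) + cmod (piece_centre i - 1/2)"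
    using norm_triangle_ineq[of "w - piece_centre i" "piece_centre i - 1/2"] by simp
  also have "\<dots> \<le> 3 / (4 * real (piece_level i)) + (1/2 - 1 / real (piece_level i))"
    using w norm_piece_centre_diff_half[of i] by linarith
  also have "\<dots> < 1/2"
    using piece_level_ge[of i] by (simp add: field_simps)
  finally show "w \<in> DD" by (simp add: DD_def dist_norm norm_minus_commute)
qed

lemma norm_piece_ratio_le:
  assumes "z \<in> DD"
  shows "cmod ((piece_map i z - piece_centre i) / of_real (piece_radius i)) \<le> 2/3"
proof -
  let ?m = "real (piece_level i)"
  have "cmod ((piece_map i z - piece_centre i) / of_real (piece_radius i))
      = cmod (piece_map i z - piece_centre i) / piece_radius i"
    using piece_radius_pos[of i] by (simp add: norm_divide)
  also have "\<dots> \<le> (1 / ?m^2) / piece_radius i"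
    using piece_radius_pos[of i] by (intro divide_right_mono norm_piece_map_diff_le[OF assms]) simp
  also have "\<dots> = 4 / (3 * ?m)"
    using piece_level_ge[of i] by (simp add: piece_radius_def field_simps power2_eq_square)
  also have "\<dots> \<le> 2/3"
    using piece_level_ge[of i] by (simp add: field_simps)
  finally show ?thesis .
qed

lemma piece_map_in_ball:
  assumes "z \<in> DD"
  shows "piece_map i z \<in> ball (piece_centre i) (piece_radius i)"
proof -
  have "cmod (piece_map i z - piece_centre i) / piece_radius i \<le> 2/3"
    using norm_piece_ratio_le[OF assms, of i] piece_radius_pos[of i] by (simp add: norm_divide)
  then show ?thesis
    using piece_radius_pos[of i] by (simp add: dist_norm norm_minus_commute divide_le_eq)
qed

lemma norm_piece_le:
  assumes "0 \<le> p" "p \<le> 1" "f \<in> Hinf" "z \<in> DD"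
  shows "cmod (piece p i f z) \<le> hnorm f / (real (piece_level i))^2"
proof -
  have "real (piece_level i) ^ 2 \<le> cmod (of_nat (piece_level i) + z) ^ 2"
    using of_nat_le_norm_add_DD[OF assms(4)] by (intro power_mono) auto
  moreover have "cmod (piece_weight p i) * cmod (f (piece_map i z)) \<le> 1 * hnorm f"
    using assms by (intro mult_mono norm_piece_weight_le norm_le_hnorm hnorm_nonneg) auto
  moreover have "cmod (piece p i f z)
      = cmod (piece_weight p i) * cmod (f (piece_map i z)) / cmod (of_nat (piece_level i) + z) ^ 2"
    by (simp add: piece_def norm_mult norm_divide norm_power)
  ultimately show ?thesis
    using piece_level_ge[of i] hnorm_nonneg[OF assms(3)] by (simp add: frac_le)
qed

lemma summable_inverse_piece_level_sq: "summable (\<lambda>i. 1 / (real (piece_level i))^2)"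
proof (rule summable_comparison_test')
  have "summable (\<lambda>i. inverse (real (Suc i) ^ 2))"
    using inverse_power_summable[of 2] by (subst summable_Suc_iff) simp
  then show "summable (\<lambda>i. 4 * inverse (real (Suc i) ^ 2))"
    by (rule summable_mult)
  fix i :: nat
  have "real (Suc i) \<le> 2 * real (piece_level i)"
    by (simp add: piece_level_def)
  then have "real (Suc i) ^ 2 \<le> 4 * real (piece_level i) ^ 2"
    using power_mono[of "real (Suc i)" "2 * real (piece_level i)" 2] by (simp add: power_mult_distrib)
  then show "norm (1 / (real (piece_level i))^2) \<le> 4 * inverse (real (Suc i) ^ 2)"
    using piece_level_ge[of i] by (simp add: field_simps)
qed

lemma A_op_eq_suminf_piece:
  assumes "0 \<le> p" "p \<le> 1" "f \<in> Hinf" "z \<in> DD"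
  shows "A_op p f z = (\<Sum>i. piece p i f z)"
proof -
  have "summable (\<lambda>i. piece p i f z)"
    by (rule summable_comparison_test'[OF summable_mult[OF summable_inverse_piece_level_sq, of "hnorm f"]])
       (use norm_piece_le[OF assms] in simp)
  then have "(\<lambda>j. \<Sum>i\<in>{j * 2..<j * 2 + 2}. piece p i f z) sums (\<Sum>i. piece p i f z)"
    by (rule sums_group[OF summable_sums]) simp
  moreover have "(\<Sum>i\<in>{j * 2..<j * 2 + 2}. piece p i f z) = branch_term p (j + 2) f z" for j
    using branch_term_eq_piece_pair[of p j f z] by (simp add: numeral_2_eq_2 mult.commute)
  ultimately show ?thesis
    using assms(4) by (simp add: A_op_def sums_iff)
qed

definition taylor_functional :: "nat \<Rightarrow> nat \<Rightarrow> (complex \<Rightarrow> complex) \<Rightarrow> complex" where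
  "taylor_functional i k f = (deriv ^^ k) f (piece_centre i) / fact k * of_real (piece_radius i) ^ k"

definition taylor_atom :: "real \<Rightarrow> nat \<Rightarrow> nat \<Rightarrow> complex \<Rightarrow> complex" where
  "taylor_atom p i k z =
     (if z \<in> DD then piece_weight p i * ((piece_map i z - piece_centre i) / of_real (piece_radius i)) ^ k
        / (of_nat (piece_level i) + z)^2 else 0)"

lemma norm_taylor_functional_le:
  assumes "f \<in> Hinf"
  shows "cmod (taylor_functional i k f) \<le> hnorm f"
proof -
  have hol: "f holomorphic_on cball (piece_centre i) (piece_radius i)"
    using Hinf_holomorphic[OF assms] cball_piece_centre_subset_DD by (rule holomorphic_on_subset)
  have "cmod ((deriv ^^ k) f (piece_centre i)) \<le> fact k * hnorm f / piece_radius i ^ k"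
    using hol piece_radius_pos[of i] norm_le_hnorm[OF assms]
    by (intro Cauchy_inequality holomorphic_on_imp_continuous_on)
       (auto intro: holomorphic_on_subset[OF hol ball_subset_cball])
  then show ?thesis
    using piece_radius_pos[of i]
    by (simp add: taylor_functional_def norm_mult norm_divide norm_power field_simps)
qed

lemma lin_functional_taylor_functional: "lin_functional (taylor_functional i k)"
proof -
  have "piece_centre i \<in> DD"
    using cball_piece_centre_subset_DD[of i] piece_radius_pos[of i] by auto
  moreover have "open DD" by (simp add: DD_def)
  ultimately show ?thesis
    unfolding lin_functional_def taylor_functional_def
    by (auto simp: higher_deriv_add[OF Hinf_holomorphic Hinf_holomorphic] field_simps
        higher_deriv_cmult[OF Hinf_holomorphic])
qed

lemma norm_taylor_atom_le:
  assumes "0 \<le> p" "p \<le> 1"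
  shows "cmod (taylor_atom p i k z) \<le> (2/3)^k / (real (piece_level i))^2"
proof (cases "z \<in> DD")
  case True
  have "cmod (((piece_map i z - piece_centre i) / of_real (piece_radius i)) ^ k) \<le> (2/3)^k"
    unfolding norm_power using norm_piece_ratio_le[OF True] by (intro power_mono) auto
  moreover have "real (piece_level i) ^ 2 \<le> cmod (of_nat (piece_level i) + z) ^ 2"
    using of_nat_le_norm_add_DD[OF True] by (intro power_mono) auto
  moreover have "cmod (taylor_atom p i k z) = cmod (piece_weight p i)
      * cmod (((piece_map i z - piece_centre i) / of_real (piece_radius i)) ^ k)
      / cmod (of_nat (piece_level i) + z) ^ 2"
    using True by (simp add: taylor_atom_def norm_mult norm_divide norm_power)
  ultimately have "cmod (taylor_atom p i k z) \<le> 1 * (2/3)^k / (real (piece_level i))^2"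
    using norm_piece_weight_le[OF assms, of i] piece_level_ge[of i]
    by (simp only:) (intro frac_le mult_mono; simp)
  then show ?thesis by simp
qed (simp add: taylor_atom_def)

lemma taylor_atom_Hinf:
  assumes "0 \<le> p" "p \<le> 1"
  shows "taylor_atom p i k \<in> Hinf"
proof (rule HinfI)
  have "of_nat (piece_level i) + z \<noteq> 0" if "z \<in> DD" for z
    using of_nat_le_norm_add_DD[OF that, of "piece_level i"] piece_level_ge[of i] by auto
  then have "(\<lambda>z. piece_weight p i * ((piece_map i z - piece_centre i) / of_real (piece_radius i)) ^ k
      / (of_nat (piece_level i) + z)^2) holomorphic_on DD"
    by (cases "even i") (auto simp: piece_map_def intro!: holomorphic_intros)
  then show "taylor_atom p i k holomorphic_on DD"
    by (rule holomorphic_transform) (simp add: taylor_atom_def)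
  show "cmod (taylor_atom p i k z) \<le> (2/3)^k / (real (piece_level i))^2" for z
    using assms by (rule norm_taylor_atom_le)
  show "taylor_atom p i k z = 0" if "z \<notin> DD" for z
    using that by (simp add: taylor_atom_def)
qed

lemma taylor_atom_sums:
  assumes "f \<in> Hinf" "z \<in> DD"
  shows "(\<lambda>k. taylor_functional i k f * taylor_atom p i k z) sums piece p i f z"
proof -
  let ?c = "piece_centre i" and ?r = "piece_radius i" and ?w = "piece_map i z"
  let ?a = "piece_weight p i / (of_nat (piece_level i) + z)^2"
  have "f holomorphic_on ball ?c ?r"
    using Hinf_holomorphic[OF assms(1)] cball_piece_centre_subset_DD ball_subset_cball
    by (blast intro: holomorphic_on_subset)
  then have "(\<lambda>k. (deriv ^^ k) f ?c / fact k * (?w - ?c) ^ k) sums f ?w"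
    using piece_map_in_ball[OF assms(2)] by (rule holomorphic_power_series)
  then have "(\<lambda>k. ?a * ((deriv ^^ k) f ?c / fact k * (?w - ?c) ^ k)) sums (?a * f ?w)"
    by (rule sums_mult)
  moreover have "taylor_functional i k f * taylor_atom p i k z
      = ?a * ((deriv ^^ k) f ?c / fact k * (?w - ?c) ^ k)" for k
    using assms(2) piece_radius_pos[of i]
    by (simp add: taylor_functional_def taylor_atom_def power_divide mult_ac)
  ultimately show ?thesis
    by (simp add: piece_def)
qed

lemma summable_on_taylor_bound: "(\<lambda>(i, k). (2/3::real)^k / (real (piece_level i))^2) summable_on UNIV"
proof -
  have "((\<lambda>k. (2/3::real)^k / (real (piece_level i))^2) has_sum 3 / (real (piece_level i))^2) UNIV" for i
  proof (rule norm_summable_imp_has_sum)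
    show "(\<lambda>k. (2/3::real)^k / (real (piece_level i))^2) sums (3 / (real (piece_level i))^2)"
      using sums_divide[OF geometric_sums[of "2/3::real"]] by simp
    then show "summable (\<lambda>k. norm ((2/3::real)^k / (real (piece_level i))^2))"
      by (simp add: sums_iff)
  qed
  moreover have "(\<lambda>i. 3 / (real (piece_level i))^2) summable_on UNIV"
    using summable_mult[OF summable_inverse_piece_level_sq, of 3]
    by (subst summable_on_UNIV_nonneg_real_iff) auto
  ultimately have "(\<lambda>(i, k). (2/3::real)^k / (real (piece_level i))^2) summable_on Sigma UNIV (\<lambda>_. UNIV)"
    by (intro summable_on_SigmaI) (auto simp: case_prod_beta)
  then show ?thesis by simp
qed

lemma nuclear_A_op:
  assumes "0 \<le> p" "p \<le> 1"
  shows "nuclear_on_Hinf (A_op p)"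
proof (rule nuclear_on_HinfI)
  show "taylor_atom p i k \<in> Hinf" for i k
    using assms by (rule taylor_atom_Hinf)
  show "cmod (taylor_atom p i k z) \<le> (2/3)^k / (real (piece_level i))^2" for i k z
    using assms by (rule norm_taylor_atom_le)
  show "A_op p f z = (\<Sum>i. \<Sum>k. taylor_functional i k f * taylor_atom p i k z)" if "f \<in> Hinf" for f z
  proof (cases "z \<in> DD")
    case True
    then show ?thesis
      using A_op_eq_suminf_piece[OF assms that] taylor_atom_sums[OF that True] by (simp add: sums_iff)
  qed (simp add: A_op_def taylor_atom_def)
qed (use lin_functional_taylor_functional norm_taylor_functional_le summable_on_taylor_bound in auto)

theorem mainTheorem2:
  fixes p :: real
  assumes "0 < p" and "p < 1"
  shows "nuclear_on_Hinf (A_op p)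
       \<and> (\<forall>f\<in>Hinf. B_op p f \<in> Hinf)
       \<and> (\<exists>J. (\<forall>f\<in>Hinf. J f \<in> Hinf)
              \<and> (\<forall>f\<in>Hinf. (\<lambda>z. J f z - B_op p (J f) z) = f)
              \<and> (\<forall>f\<in>Hinf. J (\<lambda>z. f z - B_op p f z) = f)
              \<and> (\<exists>C. \<forall>f\<in>Hinf. hnorm (J f) \<le> C * hnorm f))"
proof -
  have p: "0 \<le> p" "p \<le> 1" using assms by auto
  define s where "s = sqrt (1 - 5 * p / 9)"
  have s: "0 < s" "s < 1" "s^2 = 1 - 5 * p / 9"
    using assms by (auto simp: s_def)
  have decay: "cmod ((B_op p ^^ k) f z) \<le> 1 / s * s ^ k * hnorm f" if "f \<in> Hinf" for f k z
  proof (rule norm_funpow_le_of_two_step_contraction)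
    show "cmod (B_op p g z) \<le> M" if "0 \<le> M" "\<And>w. cmod (g w) \<le> M" for g M z
      using that by (intro norm_B_op_le_sup[OF p]) auto
    show "cmod (B_op p (B_op p g) z) \<le> s^2 * M" if "0 \<le> M" "\<And>w. cmod (g w) \<le> M" for g M z
      unfolding s(3) using that by (intro norm_B_op_B_op_le[OF p]) auto
  qed (use s hnorm_nonneg[OF that] norm_le_hnorm[OF that] in auto)
  show ?thesis
  proof (intro conjI ballI)
    show "nuclear_on_Hinf (A_op p)"
      using p by (rule nuclear_A_op)
    show "B_op p f \<in> Hinf" if "f \<in> Hinf" for f
      using p that by (rule B_op_Hinf)
  qed (rule Neumann_series_inverse_Hinf[OF B_op_Hinf[OF p] B_op_diff B_op_suminf decay
        less_imp_le[OF s(1)] s(2)])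
qed

end
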